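(* Let $(p_k)_{k\in\mathbb Z}$ be a probability density on $\mathbb Z$ with $p_k=p_{-k}$, $p_{k+1}\le p_k$ for $k\ge0$, and $\sum_kk^2p_k\in(0,\infty)$; let $Q_o$ be the product probability on $\mathbb Z^{\mathbb N}$ of sequences $\xi=(\xi_n)_{n\ge1}$ of i.i.d. variables with density $(p_k)$, with left shift $\sigma_\xi$. Let $P_o$ be the product measure on $(\mathbb R^+)^{\mathbb Z}$ of i.i.d. positive random variables $(\zeta_j)_{j\in\mathbb Z}$ with finite mean, with left shift $\sigma_\zeta$. Let $\Sigma:=\mathbb Z^{\mathbb N}\times(\mathbb R^+)^{\mathbb Z}$, $\nu:=Q_o\otimes P_o$, $T(\xi,\zeta):=(\sigma_\xi(\xi),\sigma_\zeta^{\xi_1}(\zeta))$. Then every $T$-invariant set $A\subseteq\Sigma$ is of the form $A=\mathbb Z^{\mathbb N}\times C$ mod $\nu$, where $C$ is a measurable subset of $(\mathbb R^+)^{\mathbb Z}$.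
   Context: $\sigma_\zeta^k$ is the $k$-th iterate of the invertible shift $\sigma_\zeta$, $k\in\mathbb Z$. "mod $\nu$" means up to a $\nu$-null set. *)

theory Defs
  imports "HOL-Probability.Probability"
begin

text \<open>Left shift on sequences indexed by nat (index 0 stands for the paper's index 1).\<close>
definition shift_xi :: "(nat \<Rightarrow> int) \<Rightarrow> (nat \<Rightarrow> int)" where
  "shift_xi \<xi> = (\<lambda>n. \<xi> (Suc n))"

definition shift_zeta_pow :: "int \<Rightarrow> (int \<Rightarrow> real) \<Rightarrow> (int \<Rightarrow> real)" where
  "shift_zeta_pow k \<zeta> = (\<lambda>j. \<zeta> (j + k))"

definition skewT :: "(nat \<Rightarrow> int) \<times> (int \<Rightarrow> real) \<Rightarrow> (nat \<Rightarrow> int) \<times> (int \<Rightarrow> real)" where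
  "skewT x = (shift_xi (fst x), shift_zeta_pow (fst x 0) (snd x))"

end

theory Submission
  imports Defs
begin

text \<open>The \<open>m\<close>-th iterate of \<open>T\<close> shifts \<open>\<xi>\<close> by \<open>m\<close> and shifts \<open>\<zeta>\<close> by \<open>\<xi>\<^sub>1 + \<dots> + \<xi>\<^sub>m\<close>, so
  \<open>T\<^sup>2\<^sup>n(\<xi>, \<zeta>)\<close> does not change when the blocks \<open>\<xi>\<^sub>1 \<dots> \<xi>\<^sub>n\<close> and \<open>\<xi>\<^sub>n\<^sub>+\<^sub>1 \<dots> \<xi>\<^sub>2\<^sub>n\<close> are
  exchanged. Hence every \<open>\<zeta>\<close>-section of a \<open>T\<close>-invariant set is invariant under these block
  swaps, and a Hewitt--Savage argument shows that it has measure 0 or 1: approximate the section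
  by a cylinder over the first \<open>n\<close> coordinates; its image under the swap is an independent copy of
  it, so the measure \<open>a\<close> of the section satisfies \<open>a = a\<^sup>2\<close>. With \<open>C\<close> the set of \<open>\<zeta>\<close> whose
  section has full measure, Fubini gives \<open>A = \<int>\<^sup>\<nat> \<times> C\<close> mod \<open>\<nu>\<close>. Only the independence of the
  coordinates is used.\<close>

lemma (in finite_measure) measure_sym_diff_triangle:
  assumes "A \<in> sets M" "B \<in> sets M" "C \<in> sets M"
  shows "measure M (sym_diff A C) \<le> measure M (sym_diff A B) + measure M (sym_diff B C)"
proof -
  have "measure M (sym_diff A C) \<le> measure M (sym_diff A B \<union> sym_diff B C)"
    using assms by (intro finite_measure_mono) auto
  also have "\<dots> \<le> measure M (sym_diff A B) + measure M (sym_diff B C)"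
    using assms by (intro measure_Un_le) auto
  finally show ?thesis .
qed

lemma (in finite_measure) abs_measure_diff_le_sym_diff:
  assumes "A \<in> sets M" "B \<in> sets M"
  shows "\<bar>measure M A - measure M B\<bar> \<le> measure M (sym_diff A B)"
proof -
  have "measure M A \<le> measure M B + measure M (sym_diff A B)"
    using measure_sym_diff_triangle[of A B "{}"] assms by (simp add: Un_commute)
  moreover have "measure M B \<le> measure M A + measure M (sym_diff A B)"
    using measure_sym_diff_triangle[of B A "{}"] assms by (simp add: Un_commute)
  ultimately show ?thesis by linarith
qed

lemma (in finite_measure) approx_Union_by_algebra:
  fixes A :: "nat \<Rightarrow> 'a set"
  assumes G: "algebra (space M) G" "G \<subseteq> sets M" and A: "range A \<subseteq> sets M"
    and approx: "\<And>i d. d > 0 \<Longrightarrow> \<exists>B\<in>G. measure M (sym_diff (A i) B) < d" and e: "e > 0"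
  shows "\<exists>B\<in>G. measure M (sym_diff (\<Union>i. A i) B) < e"
proof -
  interpret G: algebra "space M" G by fact
  have "(\<lambda>N. measure M (\<Union>i<N. A i)) \<longlonglongrightarrow> measure M (\<Union>N. \<Union>i<N. A i)"
    using A by (intro finite_Lim_measure_incseq) (auto simp: incseq_def intro: less_le_trans)
  moreover have "(\<Union>N. \<Union>i<N. A i) = (\<Union>i. A i)" by blast
  ultimately obtain N where "norm (measure M (\<Union>i<N. A i) - measure M (\<Union>i. A i)) < e / 2"
    using LIMSEQ_D[of _ _ "e / 2"] e by fastforce
  then have N: "measure M (\<Union>i. A i) - measure M (\<Union>i<N. A i) < e / 2"
    unfolding real_norm_def by arith
  define d where "d = e / (2 * (real N + 1))"
  have "d > 0" using e by (simp add: d_def)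
  then obtain B where B: "\<And>i. B i \<in> G" "\<And>i. measure M (sym_diff (A i) (B i)) < d"
    using approx by metis
  have B_sets: "B i \<in> sets M" for i using B G by auto
  have "measure M (sym_diff (\<Union>i. A i) (\<Union>i<N. B i))
      \<le> measure M ((\<Union>i. A i) - (\<Union>i<N. A i)) + measure M (\<Union>i<N. sym_diff (A i) (B i))"
  proof -
    have "sym_diff (\<Union>i. A i) (\<Union>i<N. B i) \<subseteq> ((\<Union>i. A i) - (\<Union>i<N. A i)) \<union> (\<Union>i<N. sym_diff (A i) (B i))"
      by blast
    then show ?thesis
      using A B_sets by (intro order.trans[OF finite_measure_mono measure_Un_le]) auto
  qed
  also have "measure M ((\<Union>i. A i) - (\<Union>i<N. A i)) = measure M (\<Union>i. A i) - measure M (\<Union>i<N. A i)"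
    using A by (intro finite_measure_Diff) auto
  also have "measure M (\<Union>i<N. sym_diff (A i) (B i)) \<le> (\<Sum>i<N. measure M (sym_diff (A i) (B i)))"
    using A B_sets by (intro measure_UNION_le) auto
  also have "\<dots> \<le> real N * d"
    using sum_mono[of "{..<N}" _ "\<lambda>_. d"] B(2) by (simp add: less_imp_le)
  also have "real N * d < e / 2"
    using e by (simp add: d_def field_simps)
  finally have "measure M (sym_diff (\<Union>i. A i) (\<Union>i<N. B i)) < e"
    using N by linarith
  moreover have "(\<Union>i<N. B i) \<in> G" using B by auto
  ultimately show ?thesis by blast
qed

lemma (in finite_measure) approx_sigma_sets_by_algebra:
  assumes G: "algebra (space M) G" "G \<subseteq> sets M"
    and A: "A \<in> sigma_sets (space M) G" and e: "e > 0"
  shows "\<exists>B\<in>G. measure M (sym_diff A B) < e"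
  using A e
proof (induction arbitrary: e)
  case (Basic a)
  then show ?case by (intro bexI[of _ a]) auto
next
  case Empty
  then show ?case using G by (intro bexI[of _ "{}"]) (auto simp: algebra_iff_Un)
next
  case (Compl a)
  then obtain B where B: "B \<in> G" "measure M (sym_diff a B) < e" by blast
  have "a \<subseteq> space M" using Compl.hyps G sigma_sets_into_sp[of G "space M"] by (auto simp: algebra_iff_Un)
  moreover have "B \<subseteq> space M" using B G by (auto simp: algebra_iff_Un)
  ultimately have "sym_diff (space M - a) (space M - B) = sym_diff a B" by blast
  then show ?case using B G by (intro bexI[of _ "space M - B"]) (auto simp: algebra_iff_Un)
next
  case (Union a)
  have "range a \<subseteq> sets M"
    using Union.hyps sets.sigma_sets_subset[OF G(2)] by auto
  with Union.IH Union.prems show ?case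
    by (intro approx_Union_by_algebra[OF G]) auto
qed

definition initial_cylinders :: "(nat \<Rightarrow> 'a measure) \<Rightarrow> (nat \<Rightarrow> 'a) set set" where
  "initial_cylinders M = {prod_emb UNIV M {..<n} X | n X. X \<in> sets (PiM {..<n} M)}"

lemma initial_cylinder_extend:
  fixes M :: "nat \<Rightarrow> 'a measure"
  assumes "n \<le> k" "X \<in> sets (PiM {..<n} M)"
  obtains Y where "Y \<in> sets (PiM {..<k} M)" "prod_emb UNIV M {..<n} X = prod_emb UNIV M {..<k} Y"
proof
  show "prod_emb {..<k} M {..<n} X \<in> sets (PiM {..<k} M)"
    using assms by (intro measurable_prod_emb) auto
  show "prod_emb UNIV M {..<n} X = prod_emb UNIV M {..<k} (prod_emb {..<k} M {..<n} X)"
    using assms by simp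
qed

lemma initial_cylinders_sets: "initial_cylinders M \<subseteq> sets (PiM UNIV M)"
  by (auto simp: initial_cylinders_def)

lemma algebra_initial_cylinders: "algebra (space (PiM UNIV M)) (initial_cylinders M)"
  unfolding algebra_iff_Un
proof (intro conjI ballI)
  show "initial_cylinders M \<subseteq> Pow (space (PiM UNIV M))"
    using initial_cylinders_sets sets.sets_into_space by blast
  show "{} \<in> initial_cylinders M"
    unfolding initial_cylinders_def by (intro CollectI exI[of _ 0] exI[of _ "{}"]) auto
next
  fix a assume "a \<in> initial_cylinders M"
  then obtain n X where a: "a = prod_emb UNIV M {..<n} X" and X: "X \<in> sets (PiM {..<n} M)"
    by (auto simp: initial_cylinders_def)
  have "space (PiM UNIV M) - a = prod_emb UNIV M {..<n} (space (PiM {..<n} M) - X)"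
    by (auto simp: a prod_emb_def space_PiM PiE_iff)
  then show "space (PiM UNIV M) - a \<in> initial_cylinders M"
    using X unfolding initial_cylinders_def by blast
next
  fix a b assume "a \<in> initial_cylinders M" "b \<in> initial_cylinders M"
  then obtain n m X Y where a: "a = prod_emb UNIV M {..<n} X" "X \<in> sets (PiM {..<n} M)"
    and b: "b = prod_emb UNIV M {..<m} Y" "Y \<in> sets (PiM {..<m} M)"
    by (auto simp: initial_cylinders_def)
  obtain X' where X': "X' \<in> sets (PiM {..<max n m} M)" "a = prod_emb UNIV M {..<max n m} X'"
    using initial_cylinder_extend[OF _ a(2), of "max n m"] a(1) by auto
  obtain Y' where Y': "Y' \<in> sets (PiM {..<max n m} M)" "b = prod_emb UNIV M {..<max n m} Y'"
    using initial_cylinder_extend[OF _ b(2), of "max n m"] b(1) by auto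
  have "a \<union> b = prod_emb UNIV M {..<max n m} (X' \<union> Y')"
    using X' Y' by simp
  then show "a \<union> b \<in> initial_cylinders M"
    using X'(1) Y'(1) unfolding initial_cylinders_def by blast
qed

lemma sets_PiM_eq_sigma_initial_cylinders:
  "sets (PiM UNIV M) = sigma_sets (space (PiM UNIV M)) (initial_cylinders M)"
proof
  show "sigma_sets (space (PiM UNIV M)) (initial_cylinders M) \<subseteq> sets (PiM UNIV M)"
    using initial_cylinders_sets by (rule sets.sigma_sets_subset)
  have "prod_algebra UNIV M \<subseteq> initial_cylinders M"
  proof
    fix x assume "x \<in> prod_algebra UNIV M"
    then obtain J E where J: "finite J" and x: "x = prod_emb UNIV M J (Pi\<^sub>E J E)"
      and E: "\<And>i. i \<in> J \<Longrightarrow> E i \<in> sets (M i)"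
      by (auto elim!: prod_algebraE)
    obtain n where n: "J \<subseteq> {..<n}" using J finite_nat_bounded by blast
    have "x = prod_emb UNIV M {..<n} (prod_emb {..<n} M J (Pi\<^sub>E J E))"
      using n x by simp
    moreover have "prod_emb {..<n} M J (Pi\<^sub>E J E) \<in> sets (PiM {..<n} M)"
      using n J E by (intro measurable_prod_emb sets_PiM_I_finite) auto
    ultimately show "x \<in> initial_cylinders M" unfolding initial_cylinders_def by blast
  qed
  then show "sets (PiM UNIV M) \<subseteq> sigma_sets (space (PiM UNIV M)) (initial_cylinders M)"
    unfolding sets_PiM space_PiM[symmetric] by (rule sigma_sets_mono')
qed

lemma measure_PiM_prod_emb_Int:
  fixes M :: "'i \<Rightarrow> 'a measure"
  assumes M: "\<And>i. prob_space (M i)" and IJ: "I \<inter> J = {}"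
    and X: "X \<in> sets (PiM I M)" and Y: "Y \<in> sets (PiM J M)"
  shows "measure (PiM UNIV M) (prod_emb UNIV M I X \<inter> prod_emb UNIV M J Y) =
    measure (PiM UNIV M) (prod_emb UNIV M I X) * measure (PiM UNIV M) (prod_emb UNIV M J Y)"
proof -
  interpret prob_space "PiM UNIV M" using M by (rule prob_space_PiM)
  have "(\<lambda>\<omega>. restrict \<omega> UNIV) = (\<lambda>\<omega>::'i \<Rightarrow> 'a. \<omega>)"
    by (simp add: restrict_def)
  then have "indep_vars M (\<lambda>i \<omega>. \<omega> i) UNIV"
    by (subst indep_vars_iff_distr_eq_PiM) (auto simp: distr_PiM_component M distr_id)
  from indep_var_restrict[OF this IJ subset_UNIV subset_UNIV]
  have "indep_var (PiM I M) (\<lambda>\<omega>. restrict \<omega> I) (PiM J M) (\<lambda>\<omega>. restrict \<omega> J)"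
    by simp
  from indep_varD[OF this X Y] show ?thesis
    by (simp add: prod_emb_def space_PiM vimage_def Int_ac Collect_conj_eq[symmetric])
qed

definition block_swap :: "nat \<Rightarrow> nat \<Rightarrow> nat" where
  "block_swap n i = (if i < n then i + n else if i < 2 * n then i - n else i)"

lemma block_swap_block_swap [simp]: "block_swap n (block_swap n i) = i"
  by (auto simp: block_swap_def)

lemma inj_block_swap: "inj (block_swap n)"
  by (metis injI block_swap_block_swap)

lemma measurable_comp_block_swap:
  "(\<lambda>\<omega>. \<omega> \<circ> block_swap n) \<in> measurable (PiM UNIV (\<lambda>_. M)) (PiM UNIV (\<lambda>_. M))"
  unfolding o_def by (intro measurable_PiM_single') (auto simp: space_PiM)

lemma distr_PiM_comp_block_swap:
  assumes "prob_space M"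
  shows "distr (PiM UNIV (\<lambda>_. M)) (PiM UNIV (\<lambda>_. M)) (\<lambda>\<omega>. \<omega> \<circ> block_swap n) = PiM UNIV (\<lambda>_. M)"
  using distr_PiM_reindex[of UNIV "\<lambda>_. M" "block_swap n" UNIV] assms inj_block_swap
  by (simp add: restrict_def o_def)

lemma measure_initial_cylinder_Int_block_swap:
  fixes M :: "'a measure"
  assumes M: "prob_space M" and X: "X \<in> sets (PiM {..<n} (\<lambda>_. M))"
  defines "Q \<equiv> PiM UNIV (\<lambda>_::nat. M)" and "B \<equiv> prod_emb UNIV (\<lambda>_. M) {..<n} X"
  shows "measure Q (B \<inter> ((\<lambda>\<omega>. \<omega> \<circ> block_swap n) -` B \<inter> space Q)) = measure Q B ^ 2"
proof -
  let ?f = "\<lambda>\<omega>. \<omega> \<circ> block_swap n"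
  define Y where "Y = (\<lambda>y. \<lambda>i\<in>{..<n}. y (i + n)) -` X \<inter> space (PiM {n..<2*n} (\<lambda>_. M))"
  have Y_sets: "Y \<in> sets (PiM {n..<2*n} (\<lambda>_. M))"
    unfolding Y_def using X
    by (intro measurable_sets[OF _ X] measurable_restrict measurable_component_singleton) auto
  have "?f -` B \<inter> space Q = prod_emb UNIV (\<lambda>_. M) {n..<2*n} Y"
  proof -
    have swap_restrict: "restrict (?f \<omega>) {..<n} = (\<lambda>i\<in>{..<n}. restrict \<omega> {n..<2*n} (i + n))" for \<omega>
      by (auto simp: block_swap_def fun_eq_iff)
    show ?thesis
      by (auto simp: B_def Y_def Q_def prod_emb_def space_PiM PiE_iff swap_restrict)
  qed
  moreover have "measure Q (?f -` B \<inter> space Q) = measure Q B"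
    using measure_distr[OF measurable_comp_block_swap[of n M], of B] distr_PiM_comp_block_swap[OF M] X
    by (simp add: B_def Q_def)
  moreover have "{..<n} \<inter> {n..<2*n} = {}" by auto
  ultimately show ?thesis
    using measure_PiM_prod_emb_Int[of "\<lambda>_. M" "{..<n}" "{n..<2*n}" X Y] M X Y_sets
    by (simp add: B_def Q_def power2_eq_square)
qed

lemma abs_diff_square_le:
  fixes a b :: real
  assumes "0 \<le> a" "a \<le> 1" "0 \<le> b" "b \<le> 1"
  shows "\<bar>a\<^sup>2 - b\<^sup>2\<bar> \<le> 2 * \<bar>a - b\<bar>"
proof -
  have "a\<^sup>2 - b\<^sup>2 = (a - b) * (a + b)"
    by (simp add: power2_eq_square algebra_simps)
  then have "\<bar>a\<^sup>2 - b\<^sup>2\<bar> = \<bar>a - b\<bar> * (a + b)"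
    using assms by (simp add: abs_mult)
  also have "\<dots> \<le> \<bar>a - b\<bar> * 2"
    using assms by (intro mult_left_mono) auto
  finally show ?thesis by simp
qed

theorem hewitt_savage_zero_one:
  fixes M :: "'a measure"
  assumes M: "prob_space M" and A: "A \<in> sets (PiM UNIV (\<lambda>_::nat. M))"
    and swap_invariant: "\<And>n \<omega>. \<omega> \<in> space (PiM UNIV (\<lambda>_::nat. M)) \<Longrightarrow> \<omega> \<circ> block_swap n \<in> A \<longleftrightarrow> \<omega> \<in> A"
  shows "measure (PiM UNIV (\<lambda>_::nat. M)) A \<in> {0, 1}"
proof -
  define Q where "Q = PiM UNIV (\<lambda>_::nat. M)"
  interpret Q: prob_space Q unfolding Q_def using M by (rule prob_space_PiM)
  have A_Q: "A \<in> sets Q" using A by (simp add: Q_def)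
  have estimate: "\<bar>Q.prob A - (Q.prob A)\<^sup>2\<bar> \<le> 4 * e" if "e > 0" for e
  proof -
    obtain B where "B \<in> initial_cylinders (\<lambda>_. M)" and AB: "Q.prob (sym_diff A B) < e"
      using Q.approx_sigma_sets_by_algebra[OF _ _ _ \<open>e > 0\<close>] algebra_initial_cylinders initial_cylinders_sets
        sets_PiM_eq_sigma_initial_cylinders A unfolding Q_def by blast
    then obtain n X where X: "X \<in> sets (PiM {..<n} (\<lambda>_. M))" and B: "B = prod_emb UNIV (\<lambda>_. M) {..<n} X"
      by (auto simp: initial_cylinders_def)
    let ?f = "\<lambda>\<omega>. \<omega> \<circ> block_swap n"
    define B' where "B' = ?f -` B \<inter> space Q"
    have B_Q: "B \<in> sets Q"
      using X by (simp add: B Q_def)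
    then have B'_Q: "B' \<in> sets Q"
      unfolding B'_def Q_def by (rule measurable_sets[OF measurable_comp_block_swap])
    have "sym_diff A B' = ?f -` sym_diff A B \<inter> space Q"
      using swap_invariant sets.sets_into_space[OF A_Q] measurable_space[OF measurable_comp_block_swap[of n M]]
      by (auto simp: B'_def Q_def)
    then have AB': "Q.prob (sym_diff A B') < e"
      using measure_distr[OF measurable_comp_block_swap[of n M], of "sym_diff A B"]
        distr_PiM_comp_block_swap[OF M] A_Q B_Q AB by (simp add: Q_def)
    have "Q.prob (sym_diff A (B \<inter> B')) \<le> Q.prob (sym_diff A B \<union> sym_diff A B')"
      using A_Q B_Q B'_Q by (intro Q.finite_measure_mono) auto
    also have "\<dots> \<le> Q.prob (sym_diff A B) + Q.prob (sym_diff A B')"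
      using A_Q B_Q B'_Q by (intro measure_Un_le) auto
    finally have "\<bar>Q.prob A - (Q.prob B)\<^sup>2\<bar> \<le> 2 * e"
      using Q.abs_measure_diff_le_sym_diff[of A "B \<inter> B'"] A_Q B_Q B'_Q AB AB'
        measure_initial_cylinder_Int_block_swap[OF M X] by (simp add: B B'_def Q_def)
    moreover have "\<bar>Q.prob A - Q.prob B\<bar> \<le> e"
      using Q.abs_measure_diff_le_sym_diff[OF A_Q B_Q] AB by simp
    moreover have "\<bar>(Q.prob A)\<^sup>2 - (Q.prob B)\<^sup>2\<bar> \<le> 2 * \<bar>Q.prob A - Q.prob B\<bar>"
      by (intro abs_diff_square_le) auto
    ultimately show ?thesis by (smt (verit))
  qed
  have "\<bar>Q.prob A - (Q.prob A)\<^sup>2\<bar> \<le> 0"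
  proof (rule field_le_epsilon)
    fix d :: real assume "d > 0"
    then show "\<bar>Q.prob A - (Q.prob A)\<^sup>2\<bar> \<le> 0 + d"
      using estimate[of "d / 4"] by simp
  qed
  then show ?thesis
    by (auto simp: Q_def power2_eq_square algebra_simps)
qed

lemma (in pair_prob_space) AE_eq_snd_cylinder_if_sections_zero_one:
  assumes A: "A \<in> sets (M1 \<Otimes>\<^sub>M M2)"
    and zero_one: "\<And>y. y \<in> space M2 \<Longrightarrow> M1.prob ((\<lambda>x. (x, y)) -` A) \<in> {0, 1}"
  shows "\<exists>C\<in>sets M2. AE z in M1 \<Otimes>\<^sub>M M2. z \<in> A \<longleftrightarrow> snd z \<in> C"
proof -
  define C where "C = {y \<in> space M2. emeasure M1 ((\<lambda>x. (x, y)) -` A) = 1}"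
  have C_sets: "C \<in> sets M2"
    unfolding C_def using measurable_emeasure_Pair2[OF A] by measurable
  define E where "E = sym_diff A (space M1 \<times> C)"
  have E_sets: "E \<in> sets (M1 \<Otimes>\<^sub>M M2)"
    unfolding E_def using A C_sets by auto
  have A_space: "A \<subseteq> space M1 \<times> space M2"
    using sets.sets_into_space[OF A] by (simp add: space_pair_measure)
  have "emeasure M1 ((\<lambda>x. (x, y)) -` E) = 0" if y: "y \<in> space M2" for y
  proof (cases "y \<in> C")
    case True
    then have "(\<lambda>x. (x, y)) -` E = space M1 - (\<lambda>x. (x, y)) -` A"
      using A_space by (auto simp: E_def)
    with True show ?thesis
      using sets_Pair2[OF A] by (simp add: C_def emeasure_compl M1.emeasure_space_1)
  next
    case False
    then have "M1.prob ((\<lambda>x. (x, y)) -` A) = 0"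
      using zero_one[OF y] y by (auto simp: C_def M1.emeasure_eq_measure)
    moreover have "(\<lambda>x. (x, y)) -` E = (\<lambda>x. (x, y)) -` A"
      using False A_space y by (auto simp: E_def)
    ultimately show ?thesis
      by (simp add: M1.emeasure_eq_measure)
  qed
  then have "emeasure (M1 \<Otimes>\<^sub>M M2) E = 0"
    by (simp add: emeasure_pair_measure_alt2[OF E_sets] nn_integral_cong[of M2 _ "\<lambda>_. 0"])
  then have "AE z in M1 \<Otimes>\<^sub>M M2. z \<in> A \<longleftrightarrow> snd z \<in> C"
    using E_sets by (intro AE_I'[of E]) (auto simp: E_def space_pair_measure)
  with C_sets show ?thesis by blast
qed

lemma funpow_mem_iff_if_invariant:
  assumes "f \<in> S \<rightarrow> S" "f -` A \<inter> S = A" "x \<in> S"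
  shows "(f ^^ n) x \<in> A \<longleftrightarrow> x \<in> A"
  using assms(3)
proof (induction n arbitrary: x)
  case (Suc n)
  then have "(f ^^ n) (f x) \<in> A \<longleftrightarrow> f x \<in> A"
    using assms(1) by blast
  with Suc.prems assms(2) show ?case
    by (auto simp: funpow_swap1)
qed simp

lemma skewT_funpow:
  "(skewT ^^ n) (\<xi>, \<zeta>) = ((\<lambda>k. \<xi> (k + n)), shift_zeta_pow (\<Sum>i<n. \<xi> i) \<zeta>)"
  by (induction n) (simp_all add: skewT_def shift_xi_def shift_zeta_pow_def fun_eq_iff ac_simps)

lemma skewT_funpow_comp_block_swap:
  "(skewT ^^ (2 * n)) (\<xi> \<circ> block_swap n, \<zeta>) = (skewT ^^ (2 * n)) (\<xi>, \<zeta>)"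
proof -
  have "(\<Sum>i<2 * n. \<xi> (block_swap n i)) = (\<Sum>i<2 * n. \<xi> i)"
    by (rule sum.reindex_bij_witness[where i="block_swap n" and j="block_swap n"])
       (auto simp: block_swap_def)
  then show ?thesis
    by (simp add: skewT_funpow block_swap_def)
qed

lemma skewT_in_space:
  "skewT \<in> space (PiM UNIV (\<lambda>_::nat. M) \<Otimes>\<^sub>M PiM UNIV (\<lambda>_::int. N))
    \<rightarrow> space (PiM UNIV (\<lambda>_::nat. M) \<Otimes>\<^sub>M PiM UNIV (\<lambda>_::int. N))"
  by (auto simp: skewT_def shift_xi_def shift_zeta_pow_def space_pair_measure space_PiM PiE_iff)

theorem lemmaA2:
  fixes p :: "int pmf" and D :: "real measure" and A :: "((nat \<Rightarrow> int) \<times> (int \<Rightarrow> real)) set"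
  assumes sym: "\<And>k. pmf p k = pmf p (- k)"
    and mono: "\<And>k. k \<ge> 0 \<Longrightarrow> pmf p (k + 1) \<le> pmf p k"
    and var_fin: "(\<lambda>k. real_of_int k ^ 2 * pmf p k) summable_on UNIV"
    and var_pos: "(\<Sum>\<^sub>\<infinity>k. real_of_int k ^ 2 * pmf p k) > 0"
    and D_prob: "prob_space D"
    and D_sets: "sets D = sets (restrict_space borel {0<..})"
    and D_mean: "integrable D (\<lambda>x. x)"
    and A_meas: "A \<in> sets (PiM UNIV (\<lambda>_::nat. measure_pmf p) \<Otimes>\<^sub>M PiM UNIV (\<lambda>_::int. D))"
    and A_inv: "skewT -` A \<inter> space (PiM UNIV (\<lambda>_::nat. measure_pmf p) \<Otimes>\<^sub>M PiM UNIV (\<lambda>_::int. D)) = A"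
  shows "\<exists>C \<in> sets (PiM UNIV (\<lambda>_::int. D)).
           AE x in (PiM UNIV (\<lambda>_::nat. measure_pmf p) \<Otimes>\<^sub>M PiM UNIV (\<lambda>_::int. D)).
             (x \<in> A \<longleftrightarrow> snd x \<in> C)"
proof -
  define Q where "Q = PiM UNIV (\<lambda>_::nat. measure_pmf p)"
  define P where "P = PiM UNIV (\<lambda>_::int. D)"
  interpret pair_prob_space Q P
    unfolding Q_def P_def pair_prob_space_def pair_sigma_finite_def
    using D_prob by (auto intro!: prob_space_PiM prob_space_imp_sigma_finite prob_space_measure_pmf)
  have "M1.prob ((\<lambda>\<xi>. (\<xi>, \<zeta>)) -` A) \<in> {0, 1}" if \<zeta>: "\<zeta> \<in> space P" for \<zeta>
    unfolding Q_def
  proof (rule hewitt_savage_zero_one[OF prob_space_measure_pmf])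
    show "(\<lambda>\<xi>. (\<xi>, \<zeta>)) -` A \<in> sets (PiM UNIV (\<lambda>_. measure_pmf p))"
      using sets_Pair2[OF A_meas] .
    fix n and \<xi> :: "nat \<Rightarrow> int"
    have "(\<xi>', \<zeta>) \<in> space (Q \<Otimes>\<^sub>M P)" for \<xi>'
      using \<zeta> by (auto simp: Q_def space_pair_measure space_PiM)
    then show "\<xi> \<circ> block_swap n \<in> (\<lambda>\<xi>. (\<xi>, \<zeta>)) -` A \<longleftrightarrow> \<xi> \<in> (\<lambda>\<xi>. (\<xi>, \<zeta>)) -` A"
      using funpow_mem_iff_if_invariant[OF skewT_in_space A_inv, of "(\<xi> \<circ> block_swap n, \<zeta>)" "2 * n"]
        funpow_mem_iff_if_invariant[OF skewT_in_space A_inv, of "(\<xi>, \<zeta>)" "2 * n"]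
      by (simp add: Q_def P_def skewT_funpow_comp_block_swap)
  qed
  moreover have "A \<in> sets (Q \<Otimes>\<^sub>M P)"
    using A_meas by (simp add: Q_def P_def)
  ultimately show ?thesis
    using AE_eq_snd_cylinder_if_sections_zero_one unfolding Q_def P_def by blast
qed

end
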